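(* Let $H$ be a fixed graph and $s$ a fixed positive integer. Let $G$ be an $n$-vertex graph not containing $M_{s+1}$ (a matching of $s+1$ pairwise disjoint edges) as a subgraph, and let $B\subseteq V(G)$ be a set such that every connected component of $G-B$ has an odd number of vertices and, writing $A_1,\dots,A_m$ for the vertex sets of these components, $|B|+\sum_{i=1}^m \frac{|A_i|-1}{2}\le s$. Then, as $n\to\infty$ (with the implied constants depending only on $H$ and $s$): (i) every vertex $v\in V(G)\setminus B$ is contained in $O(n^{\alpha(H)-1})$ copies of $H$ in $G$; (ii) the number of copies of $H$ in $G$ that contain at least one edge with both endpoints outside $B$ is $O(n^{\alpha(H)-1})$.
   Context: All graphs are finite and simple. $\alpha(H)$ denotes the independence number of $H$ (the largest order of an independent set in $H$). A copy of $H$ in $G$ is a subgraph of $G$ isomorphic to $H$. By the Berge–Tutte theorem, a set $B$ as in the statement exists for every $M_{s+1}$-free graph $G$. *)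

theory Defs
  imports Complex_Main
begin

definition graph :: "'a set \<Rightarrow> 'a set set \<Rightarrow> bool" where
  "graph V E \<longleftrightarrow> finite V \<and> (\<forall>e\<in>E. \<exists>x y. e = {x, y} \<and> x \<noteq> y \<and> x \<in> V \<and> y \<in> V)"

definition independent_set :: "'a set \<Rightarrow> 'a set set \<Rightarrow> 'a set \<Rightarrow> bool" where
  "independent_set V E S \<longleftrightarrow> S \<subseteq> V \<and> (\<forall>e\<in>E. \<not> e \<subseteq> S)"

definition alpha :: "'a set \<Rightarrow> 'a set set \<Rightarrow> nat" where
  "alpha V E = Max (card ` {S. independent_set V E S})"

definition has_matching :: "'a set set \<Rightarrow> nat \<Rightarrow> bool" where
  "has_matching E k \<longleftrightarrow> (\<exists>M. M \<subseteq> E \<and> card M = k \<and> finite M \<and>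
       (\<forall>e\<in>M. \<forall>f\<in>M. e \<noteq> f \<longrightarrow> e \<inter> f = {}))"

definition del_vertices_edges :: "'a set set \<Rightarrow> 'a set \<Rightarrow> 'a set set" where
  "del_vertices_edges E B = {e \<in> E. e \<inter> B = {}}"

definition reachable :: "'a set \<Rightarrow> 'a set set \<Rightarrow> 'a \<Rightarrow> 'a \<Rightarrow> bool" where
  "reachable V E = (\<lambda>x y. x \<in> V \<and> y \<in> V \<and> {x, y} \<in> E)\<^sup>*\<^sup>*"

definition components :: "'a set \<Rightarrow> 'a set set \<Rightarrow> 'a set set" where
  "components V E = {{u \<in> V. reachable V E v u} | v. v \<in> V}"

definition copies :: "'b set \<Rightarrow> 'b set set \<Rightarrow> 'a set \<Rightarrow> 'a set set \<Rightarrow> ('a set \<times> 'a set set) set" where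
  "copies VH EH V E = {(V', E'). V' \<subseteq> V \<and> E' \<subseteq> E \<and> (\<forall>e\<in>E'. e \<subseteq> V') \<and>
      (\<exists>f. bij_betw f VH V' \<and> (\<forall>x\<in>VH. \<forall>y\<in>VH. {x, y} \<in> EH \<longleftrightarrow> {f x, f y} \<in> E'))}"

end

theory Submission
  imports Defs "HOL-Library.FuncSet"
begin

text \<open>
  Let \<open>I\<close> be the set of vertices outside \<open>B\<close> all of whose neighbours lie in \<open>B\<close>.
  A component \<open>A\<close> of \<open>G - B\<close> with at least two vertices has \<open>|A| \<le> 2(|A| - 1)\<close>, so the
  hypothesis on \<open>B\<close> gives \<open>|V - I| \<le> 4s\<close>.  If a copy of \<open>H\<close> has a vertex outside
  \<open>B \<union> I\<close>, then the vertices of \<open>H\<close> mapped into \<open>I\<close>, together with the preimage of that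
  vertex, form an independent set of \<open>H\<close>; hence at most \<open>\<alpha>(H) - 1\<close> vertices of \<open>H\<close> land in
  \<open>I\<close> and the remaining ones land in the bounded set \<open>V - I\<close>.  Counting maps
  \<open>V(H) \<rightarrow> V(G)\<close> of this shape gives \<open>O(n^(\<alpha>(H) - 1))\<close> copies.
\<close>

lemma graph_edgeD:
  assumes "graph V E" "{x, y} \<in> E"
  shows "x \<in> V" "y \<in> V" "x \<noteq> y"
proof -
  obtain p q where "{x, y} = {p, q}" "p \<noteq> q" "p \<in> V" "q \<in> V"
    using assms unfolding graph_def by blast
  then show "x \<in> V" "y \<in> V" "x \<noteq> y" by (auto simp: doubleton_eq_iff)
qed

lemma card_le_alpha:
  assumes "graph VH EH" "independent_set VH EH S"
  shows "card S \<le> alpha VH EH"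
proof -
  have "{S. independent_set VH EH S} \<subseteq> Pow VH" by (auto simp: independent_set_def)
  then have "finite {S. independent_set VH EH S}"
    using assms(1) by (auto simp: graph_def intro: finite_subset)
  then show ?thesis unfolding alpha_def using assms(2) by (auto intro: Max_ge)
qed

lemma components_subset: "A \<in> components V E \<Longrightarrow> A \<subseteq> V"
  unfolding components_def by blast

lemma components_nonempty: "A \<in> components V E \<Longrightarrow> A \<noteq> {}"
  unfolding components_def reachable_def by auto

lemma edge_in_components:
  assumes "{x, y} \<in> E" "x \<in> V" "y \<in> V"
  shows "\<exists>A\<in>components V E. x \<in> A \<and> y \<in> A"
proof
  let ?A = "{u \<in> V. reachable V E x u}"
  show "?A \<in> components V E" using assms(2) unfolding components_def by blast
  show "x \<in> ?A \<and> y \<in> ?A"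
    using assms unfolding reachable_def by (simp add: r_into_rtranclp)
qed

definition isolated_in_deletion :: "'a set \<Rightarrow> 'a set set \<Rightarrow> 'a set \<Rightarrow> 'a set" where
  "isolated_in_deletion V E B = {x \<in> V - B. \<forall>y. {x, y} \<in> E \<longrightarrow> y \<in> B}"

lemma non_isolated_in_nontrivial_component:
  assumes "graph V E" and x: "x \<in> V - B" "x \<notin> isolated_in_deletion V E B"
  shows "\<exists>A\<in>components (V - B) (del_vertices_edges E B). x \<in> A \<and> 2 \<le> card A"
proof -
  obtain y where xy: "{x, y} \<in> E" "y \<notin> B"
    using x by (auto simp: isolated_in_deletion_def)
  have "y \<in> V" "x \<noteq> y" using graph_edgeD[OF assms(1) xy(1)] by auto
  moreover have "{x, y} \<in> del_vertices_edges E B"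
    using x xy by (auto simp: del_vertices_edges_def)
  ultimately obtain A where A: "A \<in> components (V - B) (del_vertices_edges E B)" "x \<in> A" "y \<in> A"
    using edge_in_components x xy by (metis Diff_iff)
  have "finite A"
    using components_subset[OF A(1)] assms(1) by (auto simp: graph_def intro: finite_subset)
  then have "card {x, y} \<le> card A" using A by (intro card_mono) auto
  then have "2 \<le> card A" using \<open>x \<noteq> y\<close> by simp
  with A show ?thesis by blast
qed

lemma card_non_isolated_le:
  assumes g: "graph V E" and "B \<subseteq> V"
  defines "\<C> \<equiv> components (V - B) (del_vertices_edges E B)"
  shows "real (card (V - isolated_in_deletion V E B))
           \<le> real (card B) + 4 * (\<Sum>A\<in>\<C>. (real (card A) - 1) / 2)"
proof -
  define X where "X = V - B - isolated_in_deletion V E B"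
  define \<C>\<^sub>2 where "\<C>\<^sub>2 = {A \<in> \<C>. 2 \<le> card A}"
  have finV: "finite V" using g by (simp add: graph_def)
  have \<C>_Pow: "\<C> \<subseteq> Pow V" using components_subset unfolding \<C>_def by blast
  then have finC: "finite \<C>" using finV by (simp add: finite_subset)
  have "V - isolated_in_deletion V E B = B \<union> X"
    using \<open>B \<subseteq> V\<close> by (auto simp: X_def isolated_in_deletion_def)
  then have "card (V - isolated_in_deletion V E B) \<le> card B + card X"
    by (simp add: card_Un_le)
  moreover have "card X \<le> card (\<Union>\<C>\<^sub>2)"
  proof (rule card_mono)
    show "finite (\<Union>\<C>\<^sub>2)" using \<C>_Pow finV by (auto simp: \<C>\<^sub>2_def intro: finite_subset)
    show "X \<subseteq> \<Union>\<C>\<^sub>2"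
    proof
      fix x assume "x \<in> X"
      then obtain A where "A \<in> \<C>" "x \<in> A" "2 \<le> card A"
        using non_isolated_in_nontrivial_component[OF g] unfolding X_def \<C>_def by blast
      then show "x \<in> \<Union>\<C>\<^sub>2" unfolding \<C>\<^sub>2_def by blast
    qed
  qed
  moreover have "card (\<Union>\<C>\<^sub>2) \<le> (\<Sum>A\<in>\<C>\<^sub>2. card A)" by (rule card_Union_le_sum_card)
  moreover have "(\<Sum>A\<in>\<C>\<^sub>2. real (card A)) \<le> (\<Sum>A\<in>\<C>\<^sub>2. 4 * ((real (card A) - 1) / 2))"
    by (rule sum_mono) (simp add: \<C>\<^sub>2_def)
  moreover have "(\<Sum>A\<in>\<C>\<^sub>2. 4 * ((real (card A) - 1) / 2)) \<le> (\<Sum>A\<in>\<C>. 4 * ((real (card A) - 1) / 2))"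
  proof (rule sum_mono2[OF finC])
    show "\<C>\<^sub>2 \<subseteq> \<C>" unfolding \<C>\<^sub>2_def by blast
    fix A assume "A \<in> \<C> - \<C>\<^sub>2"
    then have "A \<noteq> {}" "finite A"
      using components_nonempty[of A] \<C>_Pow finV unfolding \<C>_def by (auto dest: finite_subset)
    then show "0 \<le> 4 * ((real (card A) - 1) / 2)" by (simp add: Suc_leI card_gt_0_iff)
  qed
  ultimately show ?thesis
    by (simp only: sum_distrib_left[symmetric] of_nat_sum[symmetric] of_nat_le_iff[symmetric])
qed

lemma copies_edgeD: "c \<in> copies VH EH V E \<Longrightarrow> e \<in> snd c \<Longrightarrow> e \<in> E \<and> e \<subseteq> fst c"
  unfolding copies_def by fastforce

definition hom_image :: "'b set \<Rightarrow> 'b set set \<Rightarrow> ('b \<Rightarrow> 'a) \<Rightarrow> 'a set \<times> 'a set set" where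
  "hom_image VH EH f = (f ` VH, {{f x, f y} | x y. x \<in> VH \<and> y \<in> VH \<and> {x, y} \<in> EH})"

lemma hom_image_restrict: "hom_image VH EH (restrict f VH) = hom_image VH EH f"
  unfolding hom_image_def by force

lemma copies_hom_image:
  assumes c: "c \<in> copies VH EH V E" and g: "graph V E"
  obtains f where "f \<in> VH \<rightarrow>\<^sub>E V" "c = hom_image VH EH f"
    "\<forall>x\<in>VH. \<forall>y\<in>VH. {x, y} \<in> EH \<longrightarrow> {f x, f y} \<in> E"
proof -
  obtain V' E' f where c_eq: "c = (V', E')" and "V' \<subseteq> V" "E' \<subseteq> E" and E'V': "\<forall>e\<in>E'. e \<subseteq> V'"
    and bij: "bij_betw f VH V'" and iff: "\<forall>x\<in>VH. \<forall>y\<in>VH. {x, y} \<in> EH \<longleftrightarrow> {f x, f y} \<in> E'"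
    using c unfolding copies_def by blast
  have img: "f ` VH = V'" using bij by (simp add: bij_betw_def)
  have "E' = {{f x, f y} | x y. x \<in> VH \<and> y \<in> VH \<and> {x, y} \<in> EH}"
  proof (intro equalityI subsetI)
    fix e assume e: "e \<in> E'"
    obtain p q where "e = {p, q}"
      using e \<open>E' \<subseteq> E\<close> g unfolding graph_def by blast
    moreover have "p \<in> V'" "q \<in> V'" using e E'V' \<open>e = {p, q}\<close> by auto
    then obtain x y where "x \<in> VH" "y \<in> VH" "p = f x" "q = f y" using img by blast
    ultimately show "e \<in> {{f x, f y} | x y. x \<in> VH \<and> y \<in> VH \<and> {x, y} \<in> EH}"
      using e iff by blast
  qed (use iff in auto)
  then have "c = hom_image VH EH f" unfolding c_eq hom_image_def img by simp
  then have "c = hom_image VH EH (restrict f VH)" by (simp add: hom_image_restrict)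
  moreover have "restrict f VH \<in> VH \<rightarrow>\<^sub>E V" using img \<open>V' \<subseteq> V\<close> by auto
  moreover have "\<forall>x\<in>VH. \<forall>y\<in>VH. {x, y} \<in> EH \<longrightarrow> {restrict f VH x, restrict f VH y} \<in> E"
    using iff \<open>E' \<subseteq> E\<close> by auto
  ultimately show ?thesis using that by blast
qed

lemma card_preimage_le_alpha_minus_1:
  assumes gH: "graph VH EH"
    and hom: "\<forall>x\<in>VH. \<forall>y\<in>VH. {x, y} \<in> EH \<longrightarrow> {f x, f y} \<in> E"
    and P: "\<forall>p\<in>P. \<forall>y. {p, y} \<in> E \<longrightarrow> y \<in> B" "P \<inter> B = {}"
    and u: "u \<in> VH" "f u \<notin> B" "f u \<notin> P"
  shows "card {x\<in>VH. f x \<in> P} \<le> alpha VH EH - 1"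
proof -
  let ?S = "{x\<in>VH. f x \<in> P}"
  have "independent_set VH EH (insert u ?S)"
    unfolding independent_set_def
  proof (intro conjI ballI notI)
    fix e assume e: "e \<in> EH" and sub: "e \<subseteq> insert u ?S"
    obtain x y where xy: "e = {x, y}" "x \<noteq> y" "x \<in> VH" "y \<in> VH"
      using gH e unfolding graph_def by blast
    then have "{f x, f y} \<in> E" "{f y, f x} \<in> E" using hom e by (auto simp: insert_commute)
    then show False using sub xy P u by auto
  qed (use u in auto)
  then have "card (insert u ?S) \<le> alpha VH EH" by (rule card_le_alpha[OF gH])
  moreover have "card (insert u ?S) = card ?S + 1"
    using u gH by (simp add: graph_def)
  ultimately show ?thesis by simp
qed

lemma card_maps_few_values_in:
  assumes finA: "finite A" and finV: "finite V" and "P \<subseteq> V" "V \<noteq> {}"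
    and M: "card (V - P) \<le> M" "1 \<le> M"
  shows "card {f \<in> A \<rightarrow>\<^sub>E V. card {x\<in>A. f x \<in> P} \<le> d} \<le> 2 ^ card A * card V ^ d * M ^ card A"
proof -
  let ?\<S> = "{S. S \<subseteq> A \<and> card S \<le> d}"
  let ?maps = "\<lambda>S. PiE A (\<lambda>x. if x \<in> S then P else V - P)"
  have fin\<S>: "finite ?\<S>" using finA by (auto intro: finite_subset[of _ "Pow A"])
  have "{f \<in> A \<rightarrow>\<^sub>E V. card {x\<in>A. f x \<in> P} \<le> d} \<subseteq> (\<Union>S\<in>?\<S>. ?maps S)"
  proof
    fix f assume f: "f \<in> {f \<in> A \<rightarrow>\<^sub>E V. card {x\<in>A. f x \<in> P} \<le> d}"
    then have "f \<in> ?maps {x\<in>A. f x \<in> P}" by (auto simp: PiE_iff)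
    moreover have "{x\<in>A. f x \<in> P} \<in> ?\<S>" using f by auto
    ultimately show "f \<in> (\<Union>S\<in>?\<S>. ?maps S)" by blast
  qed
  moreover have "finite (\<Union>S\<in>?\<S>. ?maps S)"
    using fin\<S> finA finV finite_subset[OF \<open>P \<subseteq> V\<close> finV] by (intro finite_UN_I finite_PiE) auto
  ultimately have "card {f \<in> A \<rightarrow>\<^sub>E V. card {x\<in>A. f x \<in> P} \<le> d} \<le> card (\<Union>S\<in>?\<S>. ?maps S)"
    by (rule card_mono[rotated])
  also have "\<dots> \<le> (\<Sum>S\<in>?\<S>. card (?maps S))" by (rule card_UN_le[OF fin\<S>])
  also have "\<dots> \<le> (\<Sum>S\<in>?\<S>. card V ^ d * M ^ card A)"
  proof (rule sum_mono)
    fix S assume S: "S \<in> ?\<S>"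
    have "card (?maps S) = (\<Prod>x\<in>A. card (if x \<in> S then P else V - P))"
      by (rule card_PiE[OF finA])
    also have "\<dots> \<le> (\<Prod>x\<in>A. if x \<in> S then card V else M)"
      using finV \<open>P \<subseteq> V\<close> M(1) by (intro prod_mono) (simp add: card_mono)
    also have "\<dots> = card V ^ card S * M ^ card (A - S)"
      using S finA by (simp add: prod.If_cases Int_absorb1 Diff_eq)
    also have "\<dots> \<le> card V ^ d * M ^ card A"
    proof (rule mult_le_mono)
      show "card V ^ card S \<le> card V ^ d"
        using S finV \<open>V \<noteq> {}\<close> by (intro power_increasing) (auto simp: Suc_leI card_gt_0_iff)
      show "M ^ card (A - S) \<le> M ^ card A"
        using finA M(2) by (intro power_increasing card_mono) auto
    qed
    finally show "card (?maps S) \<le> card V ^ d * M ^ card A" .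
  qed
  also have "\<dots> = card ?\<S> * (card V ^ d * M ^ card A)" by simp
  also have "\<dots> \<le> 2 ^ card A * (card V ^ d * M ^ card A)"
  proof (rule mult_le_mono1)
    have "card ?\<S> \<le> card (Pow A)" using finA by (intro card_mono) auto
    then show "card ?\<S> \<le> 2 ^ card A" using finA by (simp add: card_Pow)
  qed
  finally show ?thesis by (simp add: mult.assoc)
qed

lemma card_copies_with_vertex_outside_le:
  assumes gH: "graph VH EH" and g: "graph V E" and "V \<noteq> {}"
    and P: "P \<subseteq> V" "\<forall>p\<in>P. \<forall>y. {p, y} \<in> E \<longrightarrow> y \<in> B" "P \<inter> B = {}"
    and M: "card (V - P) \<le> M" "1 \<le> M"
    and Y: "\<forall>c\<in>Y. c \<in> copies VH EH V E \<and> (\<exists>v\<in>fst c. v \<notin> B \<and> v \<notin> P)"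
  shows "card Y \<le> 2 ^ card VH * card V ^ (alpha VH EH - 1) * M ^ card VH"
proof -
  define F where "F = {f \<in> VH \<rightarrow>\<^sub>E V. card {x\<in>VH. f x \<in> P} \<le> alpha VH EH - 1}"
  have finV: "finite V" and finH: "finite VH" using g gH by (simp_all add: graph_def)
  have "Y \<subseteq> hom_image VH EH ` F"
  proof
    fix c assume "c \<in> Y"
    then obtain v where c: "c \<in> copies VH EH V E" "v \<in> fst c" "v \<notin> B" "v \<notin> P" using Y by blast
    then obtain f where f: "f \<in> VH \<rightarrow>\<^sub>E V" "c = hom_image VH EH f"
      and hom: "\<forall>x\<in>VH. \<forall>y\<in>VH. {x, y} \<in> EH \<longrightarrow> {f x, f y} \<in> E"
      using copies_hom_image[OF _ g] by blast
    obtain u where "u \<in> VH" "f u = v" using c(2) f(2) by (auto simp: hom_image_def)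
    then have "f \<in> F"
      using card_preimage_le_alpha_minus_1[OF gH hom P(2,3)] c f(1) by (simp add: F_def)
    with f(2) show "c \<in> hom_image VH EH ` F" by blast
  qed
  moreover have "finite F"
    unfolding F_def using finH finV by (simp add: finite_PiE)
  ultimately have "card Y \<le> card F" by (meson card_image_le card_mono finite_imageI le_trans)
  also have "\<dots> \<le> 2 ^ card VH * card V ^ (alpha VH EH - 1) * M ^ card VH"
    unfolding F_def using finH finV assms by (intro card_maps_few_values_in) auto
  finally show ?thesis .
qed

lemma card_copies_through_vertex_le:
  assumes gH: "graph VH EH" and g: "graph V E" and v: "v \<in> V - B"
    and K: "card (V - isolated_in_deletion V E B) \<le> K"
  shows "card {c\<in>copies VH EH V E. v \<in> fst c}
           \<le> 2 ^ card VH * card V ^ (alpha VH EH - 1) * (K + 1) ^ card VH"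
proof (rule card_copies_with_vertex_outside_le[OF gH g, where P = "isolated_in_deletion V E B - {v}"])
  have "V - (isolated_in_deletion V E B - {v}) = insert v (V - isolated_in_deletion V E B)"
    using v by blast
  then show "card (V - (isolated_in_deletion V E B - {v})) \<le> K + 1"
    using K g by (simp add: graph_def card_insert_if)
  show "\<forall>c\<in>{c\<in>copies VH EH V E. v \<in> fst c}.
      c \<in> copies VH EH V E \<and> (\<exists>u\<in>fst c. u \<notin> B \<and> u \<notin> isolated_in_deletion V E B - {v})"
    using v by blast
qed (use v in \<open>auto simp: isolated_in_deletion_def\<close>)

lemma card_copies_with_edge_outside_le:
  assumes gH: "graph VH EH" and g: "graph V E" and "V \<noteq> {}"
    and K: "card (V - isolated_in_deletion V E B) \<le> K"
  shows "card {c\<in>copies VH EH V E. \<exists>e\<in>snd c. e \<inter> B = {}}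
           \<le> 2 ^ card VH * card V ^ (alpha VH EH - 1) * (K + 1) ^ card VH"
proof (rule card_copies_with_vertex_outside_le[OF gH g \<open>V \<noteq> {}\<close>, where P = "isolated_in_deletion V E B"])
  have "\<exists>u\<in>fst c. u \<notin> B \<and> u \<notin> isolated_in_deletion V E B"
    if c: "c \<in> copies VH EH V E" "e \<in> snd c" "e \<inter> B = {}" for c e
  proof -
    have "e \<in> E" "e \<subseteq> fst c" using copies_edgeD[OF c(1,2)] by auto
    then obtain x y where e: "e = {x, y}" using g unfolding graph_def by blast
    then have "x \<notin> B" "y \<notin> B" using c(3) by auto
    then have "x \<notin> isolated_in_deletion V E B"
      using \<open>e \<in> E\<close> e by (auto simp: isolated_in_deletion_def)
    with \<open>x \<notin> B\<close> \<open>e \<subseteq> fst c\<close> e show ?thesis by blast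
  qed
  then show "\<forall>c\<in>{c\<in>copies VH EH V E. \<exists>e\<in>snd c. e \<inter> B = {}}.
      c \<in> copies VH EH V E \<and> (\<exists>u\<in>fst c. u \<notin> B \<and> u \<notin> isolated_in_deletion V E B)"
    by blast
qed (use K in \<open>auto simp: isolated_in_deletion_def\<close>)

theorem mainTheorem1:
  fixes VH :: "'b set" and EH :: "'b set set" and s :: nat
  assumes "graph VH EH" and "VH \<noteq> {}" and "s > 0"
  shows "\<exists>C::real. \<exists>N::nat. \<forall>(V::nat set) E B.
    graph V E \<and> card V \<ge> N \<and> \<not> has_matching E (Suc s) \<and> B \<subseteq> V \<and>
    (\<forall>A\<in>components (V - B) (del_vertices_edges E B). odd (card A)) \<and>
    real (card B) + (\<Sum>A\<in>components (V - B) (del_vertices_edges E B). (real (card A) - 1) / 2) \<le> real s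
    \<longrightarrow>
      (\<forall>v\<in>V - B. real (card {c\<in>copies VH EH V E. v \<in> fst c})
            \<le> C * real (card V) ^ (alpha VH EH - 1)) \<and>
      real (card {c\<in>copies VH EH V E. \<exists>e\<in>snd c. e \<inter> B = {}})
            \<le> C * real (card V) ^ (alpha VH EH - 1)"
proof (intro exI[of _ "2 ^ card VH * real (4 * s + 1) ^ card VH"] exI[of _ 1] allI impI)
  fix V :: "nat set" and E B
  assume "graph V E \<and> 1 \<le> card V \<and> \<not> has_matching E (Suc s) \<and> B \<subseteq> V \<and>
    (\<forall>A\<in>components (V - B) (del_vertices_edges E B). odd (card A)) \<and>
    real (card B) + (\<Sum>A\<in>components (V - B) (del_vertices_edges E B). (real (card A) - 1) / 2) \<le> real s"
  then have g: "graph V E" and "V \<noteq> {}" and "B \<subseteq> V"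
    and budget: "real (card B) + (\<Sum>A\<in>components (V - B) (del_vertices_edges E B). (real (card A) - 1) / 2) \<le> real s"
    by auto
  have K: "card (V - isolated_in_deletion V E B) \<le> 4 * s"
    using card_non_isolated_le[OF g \<open>B \<subseteq> V\<close>] budget by linarith
  have real_bound: "real (card Y) \<le> 2 ^ card VH * real (4 * s + 1) ^ card VH * real (card V) ^ (alpha VH EH - 1)"
    if "card Y \<le> 2 ^ card VH * card V ^ (alpha VH EH - 1) * (4 * s + 1) ^ card VH" for Y :: "'c set"
    using of_nat_mono[OF that] by (simp add: algebra_simps)
  show "(\<forall>v\<in>V - B. real (card {c\<in>copies VH EH V E. v \<in> fst c})
            \<le> 2 ^ card VH * real (4 * s + 1) ^ card VH * real (card V) ^ (alpha VH EH - 1)) \<and>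
      real (card {c\<in>copies VH EH V E. \<exists>e\<in>snd c. e \<inter> B = {}})
            \<le> 2 ^ card VH * real (4 * s + 1) ^ card VH * real (card V) ^ (alpha VH EH - 1)"
    using real_bound card_copies_through_vertex_le[OF assms(1) g _ K]
      card_copies_with_edge_outside_le[OF assms(1) g \<open>V \<noteq> {}\<close> K] by blast
qed

end
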